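(* Let $m\ge2$ and let $K_m$ have Laplacian $L$. Let $\{a_1,b_1\},\dots,\{a_r,b_r\}$ be pairwise vertex-disjoint edges of $K_m$, and let $\tilde L=L-\tfrac34\sum_{j=1}^r(\mathbf e_{a_j}-\mathbf e_{b_j})(\mathbf e_{a_j}-\mathbf e_{b_j})^T$ be the Laplacian of the weighted graph obtained from $K_m$ by setting the weight of each of these edges to $\tfrac14$. Then $\tilde L$ exhibits perfect state transfer at time $2\pi$ between $a_j$ and $b_j$ for every $j=1,\dots,r$.
   Context: $L=D-A$ is the Laplacian; $\mathbf e_u$ is the standard basis vector of vertex $u$. For a real symmetric $H$, $U_H(t)=\exp(-itH)$, and $H$ exhibits perfect state transfer between distinct $u,v$ at time $\tau$ if $U_H(\tau)\mathbf e_u=\gamma\mathbf e_v$ for some $\gamma\in\mathbb C$. *)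

theory Defs
  imports "HOL-Analysis.Analysis"
begin

primrec mpow :: "'a::semiring_1 ^'n^'n \<Rightarrow> nat \<Rightarrow> 'a^'n^'n" where
  "mpow A 0 = mat 1"
| "mpow A (Suc k) = A ** mpow A k"

definition mexp :: "complex^'n^'n \<Rightarrow> complex^'n^'n" where
  "mexp A = (\<Sum>k. (1 / fact k) *\<^sub>R mpow A k)"

definition evec :: "'n \<Rightarrow> 'a::zero_neq_one^'n" where
  "evec u = (\<chi> i. if i = u then 1 else 0)"

definition U :: "real^'n^'n \<Rightarrow> real \<Rightarrow> complex^'n^'n" where
  "U H t = mexp (\<chi> i j. (- \<i> * complex_of_real t) * complex_of_real (H $ i $ j))"

definition pst :: "real^'n^'n \<Rightarrow> 'n \<Rightarrow> 'n \<Rightarrow> real \<Rightarrow> bool" where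
  "pst H u v \<tau> \<longleftrightarrow> u \<noteq> v \<and> (\<exists>\<gamma>::complex. U H \<tau> *v evec u = \<gamma> *s evec v)"

definition lap_complete :: "real^'n^'n" where
  "lap_complete = (\<chi> i j. if i = j then real CARD('n) - 1 else -1)"

definition outer :: "real^'n \<Rightarrow> real^'n^'n" where
  "outer x = (\<chi> i j. x $ i * x $ j)"

definition Ltilde :: "nat \<Rightarrow> (nat \<Rightarrow> 'n) \<Rightarrow> (nat \<Rightarrow> 'n) \<Rightarrow> real^'n^'n" where
  "Ltilde r a b = lap_complete - (3/4) *\<^sub>R (\<Sum>j<r. outer (evec (a j) - evec (b j)))"

end

theory Submission imports Defs begin

text \<open>For an edge ab among the reweighted ones, 1, e_a - e_b and e_a + e_b - (2/m) 1 are
  eigenvectors of the modified Laplacian with eigenvalues 0, m - 3/2 and m: lowering the weight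
  of ab by 3/4 lowers the eigenvalue of e_a - e_b by 3/2, and the other modified edges are
  disjoint from ab, so all three vectors take equal values at their endpoints. At time 2\<pi> the
  phases exp(-2\<pi>i\<lambda>) are 1, -1 and 1, and e_a, e_b differ exactly in the sign of their
  component along e_a - e_b.\<close>

lemma norm_mpow_entry_le:
  fixes A :: "complex^'n::finite^'n"
  assumes row_sum: "\<And>i. (\<Sum>l\<in>UNIV. norm (A$i$l)) \<le> M"
  shows "norm (mpow A k $ i $ j) \<le> M^k"
proof (induction k arbitrary: i j)
  case 0
  then show ?case by (simp add: mat_def)
next
  case (Suc k)
  have "0 \<le> M" using row_sum[of i] by (meson order_trans sum_nonneg norm_ge_zero)
  have "norm (mpow A (Suc k) $ i $ j) = norm (\<Sum>l\<in>UNIV. A$i$l * mpow A k $ l $ j)"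
    by (simp add: matrix_matrix_mult_def)
  also have "\<dots> \<le> (\<Sum>l\<in>UNIV. norm (A$i$l) * norm (mpow A k $ l $ j))"
    by (rule order_trans[OF norm_sum]) (simp add: norm_mult)
  also have "\<dots> \<le> (\<Sum>l\<in>UNIV. norm (A$i$l) * M^k)"
    by (intro sum_mono mult_left_mono Suc.IH) auto
  also have "\<dots> = (\<Sum>l\<in>UNIV. norm (A$i$l)) * M^k" by (simp add: sum_distrib_right)
  also have "\<dots> \<le> M * M^k" using row_sum[of i] \<open>0 \<le> M\<close> by (intro mult_right_mono) auto
  finally show ?case by simp
qed

lemma summable_mexp_series:
  fixes A :: "complex^'n::finite^'n"
  shows "summable (\<lambda>k. (1 / fact k) *\<^sub>R mpow A k)"
proof -
  define M where "M = (\<Sum>i\<in>UNIV. \<Sum>l\<in>UNIV. norm (A$i$l))"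
  have row_sum: "(\<Sum>l\<in>UNIV. norm (A$i$l)) \<le> M" for i
    unfolding M_def by (rule member_le_sum) (auto intro: sum_nonneg)
  define N where "N = real CARD('n) * real CARD('n)"
  have norm_mpow: "norm (mpow A k) \<le> N * M^k" for k
  proof -
    have "norm (mpow A k) \<le> (\<Sum>i\<in>UNIV. norm (mpow A k $ i))"
      unfolding norm_vec_def by (rule L2_set_le_sum) auto
    also have "\<dots> \<le> (\<Sum>i\<in>UNIV. \<Sum>j\<in>UNIV. norm (mpow A k $ i $ j))"
      by (intro sum_mono) (simp add: norm_vec_def L2_set_le_sum)
    also have "\<dots> \<le> (\<Sum>i\<in>(UNIV::'n set). \<Sum>j\<in>(UNIV::'n set). M^k)"
      by (intro sum_mono norm_mpow_entry_le row_sum)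
    also have "\<dots> = N * M^k" by (simp add: N_def)
    finally show ?thesis .
  qed
  show ?thesis
  proof (rule summable_comparison_test')
    show "summable (\<lambda>k. N * (inverse (fact k) * M^k))"
      by (intro summable_mult summable_exp)
    fix k :: nat
    have "norm ((1 / fact k) *\<^sub>R mpow A k) = inverse (fact k) * norm (mpow A k)"
      by (simp add: field_simps)
    also have "\<dots> \<le> inverse (fact k) * (N * M^k)" by (intro mult_left_mono norm_mpow) auto
    finally show "norm ((1 / fact k) *\<^sub>R mpow A k) \<le> N * (inverse (fact k) * M^k)"
      by (simp add: algebra_simps)
  qed
qed

lemma mpow_mult_eigenvector:
  fixes A :: "complex^'n::finite^'n"
  assumes "A *v w = c *s w"
  shows "mpow A k *v w = (c^k) *s w"
proof (induction k)
  case 0 then show ?case by (simp add: matrix_vector_mul_lid)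
next
  case (Suc k)
  have "mpow A (Suc k) *v w = A *v (mpow A k *v w)" by (simp add: matrix_vector_mul_assoc)
  also have "\<dots> = c^(Suc k) *s w" using Suc assms
    by (simp add: vector_scalar_commute vector_smult_assoc mult.commute)
  finally show ?case .
qed

lemma mexp_mult_eigenvector:
  fixes A :: "complex^'n::finite^'n"
  assumes "A *v w = c *s w"
  shows "mexp A *v w = exp c *s w"
proof -
  have apply_w: "bounded_linear (\<lambda>X::complex^'n^'n. X *v w)"
    unfolding linear_conv_bounded_linear[symmetric]
    by (rule linearI) (simp_all add: matrix_vector_mult_add_rdistrib vec_eq_iff matrix_vector_mult_def
        scaleR_sum_right distrib_right sum.distrib)
  have scale_w: "bounded_linear (\<lambda>z::complex. z *s w)"
    unfolding linear_conv_bounded_linear[symmetric]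
    by (rule linearI) (simp_all add: vec_eq_iff vector_scalar_mult_def distrib_right)
  have term_w: "((1 / fact k) *\<^sub>R mpow A k) *v w = (c^k /\<^sub>R fact k) *s w" for k
  proof -
    have "(r *\<^sub>R X) *v w = r *\<^sub>R (X *v w)" for r and X :: "complex^'n^'n"
      by (simp add: vec_eq_iff matrix_vector_mult_def scaleR_sum_right)
    then show ?thesis
      by (simp add: mpow_mult_eigenvector[OF assms] vec_eq_iff vector_scalar_mult_def inverse_eq_divide)
  qed
  have "mexp A *v w = (\<Sum>k. ((1 / fact k) *\<^sub>R mpow A k) *v w)"
    unfolding mexp_def using bounded_linear.suminf[OF apply_w summable_mexp_series] by simp
  also have "\<dots> = (\<Sum>k. c^k /\<^sub>R fact k) *s w"
    unfolding term_w using bounded_linear.suminf[OF scale_w summable_exp_generic] by simp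
  also have "\<dots> = exp c *s w" by (simp add: exp_def)
  finally show ?thesis .
qed

definition of_real_vec :: "real^'n \<Rightarrow> complex^'n" where
  "of_real_vec v = (\<chi> i. complex_of_real (v$i))"

lemma U_mult_eigenvector:
  fixes H :: "real^'n::finite^'n"
  assumes "H *v v = l *\<^sub>R v"
  shows "U H t *v of_real_vec v = exp (- \<i> * of_real t * of_real l) *s of_real_vec v"
  unfolding U_def
proof (rule mexp_mult_eigenvector)
  have "(\<Sum>j\<in>UNIV. H$i$j * v$j) = l * v$i" for i
    using assms by (simp add: vec_eq_iff matrix_vector_mult_def)
  then have row:
    "(\<Sum>j\<in>UNIV. c * of_real (H$i$j) * of_real (v$j)) = c * of_real l * of_real (v$i)"
    for i and c :: complex
    by (simp add: mult.assoc flip: sum_distrib_left of_real_mult of_real_sum)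
  show "(\<chi> i j. - \<i> * of_real t * of_real (H$i$j)) *v of_real_vec v
      = (- \<i> * of_real t * of_real l) *s of_real_vec v"
    using row[of "- \<i> * of_real t"]
    by (simp add: vec_eq_iff matrix_vector_mult_def of_real_vec_def vector_scalar_mult_def)
qed

lemma exp_2pi_Ints:
  assumes "l \<in> \<int>"
  shows "exp (- \<i> * of_real (2 * pi) * of_real l) = 1"
proof -
  from assms obtain k where "l = of_int k" by (auto elim: Ints_cases)
  then have "- \<i> * of_real (2 * pi) * of_real l = 0 + \<i> * (of_int (- k) * (of_real pi * 2))"
    by simp
  then show ?thesis by (simp only: exp_plus_2pin) simp
qed

lemma exp_2pi_half_Ints:
  assumes "l + 1/2 \<in> \<int>"
  shows "exp (- \<i> * of_real (2 * pi) * of_real l) = -1"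
proof -
  from assms obtain k where "l + 1/2 = of_int k" by (auto elim: Ints_cases)
  then have l: "l = of_int k - 1/2" by linarith
  have "- \<i> * of_real (2 * pi) * of_real l = \<i> * pi + \<i> * (of_int (- k) * (of_real pi * 2))"
    unfolding l by (simp add: algebra_simps)
  then show ?thesis by (simp only: exp_plus_2pin) (simp add: exp_pi_i')
qed

lemma U_2pi_transfer:
  fixes H :: "real^'n::finite^'n"
  assumes "H *v 1 = l\<^sub>1 *\<^sub>R 1" "l\<^sub>1 \<in> \<int>"
    and "H *v (evec p - evec q) = l\<^sub>2 *\<^sub>R (evec p - evec q)" "l\<^sub>2 + 1/2 \<in> \<int>"
    and "H *v (evec p + evec q - c *\<^sub>R 1) = l\<^sub>3 *\<^sub>R (evec p + evec q - c *\<^sub>R 1)"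
      "l\<^sub>3 \<in> \<int>"
  shows "U H (2 * pi) *v evec p = evec q"
proof -
  define d :: "real^'n" where "d = evec p - evec q"
  define s :: "real^'n" where "s = evec p + evec q - c *\<^sub>R 1"
  have fix_1: "U H (2 * pi) *v of_real_vec 1 = of_real_vec 1"
    using U_mult_eigenvector[OF assms(1), of "2 * pi", unfolded exp_2pi_Ints[OF assms(2)]] by simp
  have flip_d: "U H (2 * pi) *v of_real_vec d = (-1) *s of_real_vec d"
    using U_mult_eigenvector[OF assms(3), of "2 * pi", unfolded exp_2pi_half_Ints[OF assms(4)]]
    by (simp add: d_def)
  have fix_s: "U H (2 * pi) *v of_real_vec s = of_real_vec s"
    using U_mult_eigenvector[OF assms(5), of "2 * pi", unfolded exp_2pi_Ints[OF assms(6)]] by (simp add: s_def)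
  have "(evec p :: complex^'n)
      = of_real (c/2) *s of_real_vec 1 + (1/2) *s of_real_vec d + (1/2) *s of_real_vec s"
    by (simp add: vec_eq_iff evec_def of_real_vec_def d_def s_def vector_scalar_mult_def field_simps)
  then have "U H (2 * pi) *v evec p
      = of_real (c/2) *s of_real_vec 1 - (1/2) *s of_real_vec d + (1/2) *s of_real_vec s"
    by (simp add: matrix_vector_right_distrib vector_scalar_commute fix_1 flip_d fix_s)
  also have "\<dots> = evec q"
    by (simp add: vec_eq_iff evec_def of_real_vec_def d_def s_def vector_scalar_mult_def field_simps)
  finally show ?thesis .
qed

lemma sum_matrix_vector_mult:
  "(\<Sum>k\<in>K. A k) *v w = (\<Sum>k\<in>K. A k *v w)"
  by (induction K rule: infinite_finite_induct) (simp_all add: matrix_vector_mult_add_rdistrib)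

lemma evec_eq_axis: "evec i = axis i 1"
  by (simp add: evec_def axis_def)

lemma outer_mult: "outer x *v w = (x \<bullet> w) *\<^sub>R x"
  by (simp add: vec_eq_iff outer_def matrix_vector_mult_def inner_vec_def sum_distrib_left mult_ac)

lemma lap_complete_mult:
  fixes w :: "real^'n::finite"
  shows "lap_complete *v w = real CARD('n) *\<^sub>R w - (\<Sum>i\<in>UNIV. w$i) *\<^sub>R 1"
proof -
  have "(\<Sum>j\<in>UNIV. lap_complete$i$j * w$j)
      = (\<Sum>j\<in>UNIV. (if i = j then real CARD('n) * w$j else 0) - w$j)"
    for i :: 'n
    by (intro sum.cong) (auto simp: lap_complete_def algebra_simps)
  then show ?thesis by (simp add: vec_eq_iff matrix_vector_mult_def sum_subtractf)
qed

lemma Ltilde_mult: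
  "Ltilde r a b *v w = lap_complete *v w
     - (3/4) *\<^sub>R (\<Sum>k<r. (w$a k - w$b k) *\<^sub>R (evec (a k) - evec (b k)))"
  by (simp add: Ltilde_def matrix_vector_mult_diff_rdistrib sum_matrix_vector_mult outer_mult
      evec_eq_axis inner_diff_left inner_axis' flip: scaleR_matrix_vector_assoc)

lemma edge_sum_eq_single:
  fixes a b :: "nat \<Rightarrow> 'n::finite" and w :: "real^'n"
  assumes "j < r" and "\<forall>k<r. k \<noteq> j \<longrightarrow> w$a k = w$b k"
  shows "(\<Sum>k<r. (w$a k - w$b k) *\<^sub>R (evec (a k) - evec (b k)) :: real^'n)
    = (w$a j - w$b j) *\<^sub>R (evec (a j) - evec (b j))"
proof -
  have "(\<Sum>k<r. (w$a k - w$b k) *\<^sub>R (evec (a k) - evec (b k)) :: real^'n)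
      = (\<Sum>k<r. if k = j then (w$a j - w$b j) *\<^sub>R (evec (a j) - evec (b j)) else 0)"
    using assms(2) by (intro sum.cong) auto
  also have "\<dots> = (w$a j - w$b j) *\<^sub>R (evec (a j) - evec (b j) :: real^'n)"
    using assms(1) by simp
  finally show ?thesis .
qed

lemma Ltilde_mult_ones: "Ltilde r a b *v 1 = (0 :: real^'n::finite)"
  by (simp add: Ltilde_mult lap_complete_mult)

lemma Ltilde_mult_edge_difference:
  fixes a b :: "nat \<Rightarrow> 'n::finite"
  assumes "j < r" and "a j \<noteq> b j"
    and "\<forall>k<r. k \<noteq> j \<longrightarrow> {a k, b k} \<inter> {a j, b j} = {}"
  shows "Ltilde r a b *v (evec (a j) - evec (b j))
    = (real CARD('n) - 3/2) *\<^sub>R (evec (a j) - evec (b j))"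
proof -
  define d :: "real^'n" where "d = evec (a j) - evec (b j)"
  have "(\<Sum>k<r. (d$a k - d$b k) *\<^sub>R (evec (a k) - evec (b k)))
      = (d$a j - d$b j) *\<^sub>R (evec (a j) - evec (b j) :: real^'n)"
    using assms(3) by (intro edge_sum_eq_single[OF assms(1)]) (auto simp: d_def evec_def)
  also have "\<dots> = 2 *\<^sub>R d"
    using assms(2) by (simp add: d_def evec_def)
  finally have edges: "(\<Sum>k<r. (d$a k - d$b k) *\<^sub>R (evec (a k) - evec (b k))) = 2 *\<^sub>R d" .
  have "(\<Sum>i\<in>UNIV. d$i) = 0"
    by (simp add: d_def evec_def sum_subtractf)
  with edges have "Ltilde r a b *v d = (real CARD('n) - 3/2) *\<^sub>R d"
    by (simp add: Ltilde_mult lap_complete_mult algebra_simps)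
  then show ?thesis by (simp only: d_def)
qed

lemma Ltilde_mult_edge_balanced:
  fixes a b :: "nat \<Rightarrow> 'n::finite"
  assumes "j < r" and "\<forall>k<r. k \<noteq> j \<longrightarrow> {a k, b k} \<inter> {a j, b j} = {}"
  shows "Ltilde r a b *v (evec (a j) + evec (b j) - (2 / real CARD('n)) *\<^sub>R 1)
    = real CARD('n) *\<^sub>R (evec (a j) + evec (b j) - (2 / real CARD('n)) *\<^sub>R 1)"
proof -
  define s :: "real^'n" where "s = evec (a j) + evec (b j) - (2 / real CARD('n)) *\<^sub>R 1"
  have "(\<Sum>k<r. (s$a k - s$b k) *\<^sub>R (evec (a k) - evec (b k)))
      = (s$a j - s$b j) *\<^sub>R (evec (a j) - evec (b j) :: real^'n)"
    using assms(2) by (intro edge_sum_eq_single[OF assms(1)]) (auto simp: s_def evec_def)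
  also have "s$a j - s$b j = 0"
    by (simp add: s_def evec_def)
  finally have edges: "(\<Sum>k<r. (s$a k - s$b k) *\<^sub>R (evec (a k) - evec (b k))) = (0 :: real^'n)"
    by simp
  have "(\<Sum>i\<in>UNIV. s$i) = 0"
    by (simp add: s_def evec_def sum.distrib sum_subtractf)
  with edges have "Ltilde r a b *v s = real CARD('n) *\<^sub>R s"
    by (simp add: Ltilde_mult lap_complete_mult)
  then show ?thesis by (simp only: s_def)
qed

theorem mainTheorem7:
  fixes r :: nat and a b :: "nat \<Rightarrow> 'n::finite"
  assumes "CARD('n) \<ge> 2"
    and "\<forall>j<r. a j \<noteq> b j"
    and "\<forall>i<r. \<forall>j<r. i \<noteq> j \<longrightarrow> {a i, b i} \<inter> {a j, b j} = {}"
  shows "\<forall>j<r. pst (Ltilde r a b) (a j) (b j) (2 * pi)"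
proof (intro allI impI)
  fix j assume "j < r"
  have edge: "a j \<noteq> b j"
    using assms(2) \<open>j < r\<close> by blast
  have disjoint: "\<forall>k<r. k \<noteq> j \<longrightarrow> {a k, b k} \<inter> {a j, b j} = {}"
    using assms(3) \<open>j < r\<close> by blast
  have "U (Ltilde r a b) (2 * pi) *v evec (a j) = evec (b j)"
  proof (rule U_2pi_transfer)
    show "Ltilde r a b *v 1 = 0 *\<^sub>R 1"
      by (simp add: Ltilde_mult_ones)
    show "Ltilde r a b *v (evec (a j) - evec (b j))
        = (real CARD('n) - 3/2) *\<^sub>R (evec (a j) - evec (b j))"
      by (rule Ltilde_mult_edge_difference[OF \<open>j < r\<close> edge disjoint])
    show "Ltilde r a b *v (evec (a j) + evec (b j) - (2 / real CARD('n)) *\<^sub>R 1)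
        = real CARD('n) *\<^sub>R (evec (a j) + evec (b j) - (2 / real CARD('n)) *\<^sub>R 1)"
      by (rule Ltilde_mult_edge_balanced[OF \<open>j < r\<close> disjoint])
  qed (simp_all add: Ints_diff)
  then show "pst (Ltilde r a b) (a j) (b j) (2 * pi)"
    unfolding pst_def using edge by (intro conjI exI[of _ 1]) auto
qed

end
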